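(* Let $G$ be an abelian group and let $H$ be a uniformly fully inert subgroup of $G$. Then $H$ is commensurable with some fully invariant subgroup of $G$.
   Context: All groups are additively written abelian groups. A subgroup $F$ of $G$ is fully invariant if $\phi(F)\subseteq F$ for every endomorphism $\phi$ of $G$. A subgroup $S$ of $G$ is uniformly fully inert if there is a fixed positive integer $m$ such that the quotient $(\phi(S)+S)/S$ has at most $m$ elements for every endomorphism $\phi$ of $G$. Two subgroups $B,C$ of $G$ are commensurable if both $(B+C)/B$ and $(B+C)/C$ are finite. *)

theory Defs
  imports Main
begin

definition subgrp :: "'a::ab_group_add set \<Rightarrow> bool" where
  "subgrp H \<longleftrightarrow> 0 \<in> H \<and> (\<forall>x\<in>H. \<forall>y\<in>H. x + y \<in> H) \<and> (\<forall>x\<in>H. - x \<in> H)"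

definition endo :: "('a::ab_group_add \<Rightarrow> 'a) \<Rightarrow> bool" where
  "endo \<phi> \<longleftrightarrow> (\<forall>x y. \<phi> (x + y) = \<phi> x + \<phi> y)"

definition sumset :: "'a::ab_group_add set \<Rightarrow> 'a set \<Rightarrow> 'a set" where
  "sumset A B = {a + b | a b. a \<in> A \<and> b \<in> B}"

definition quotient_set :: "'a::ab_group_add set \<Rightarrow> 'a set \<Rightarrow> 'a set set" where
  "quotient_set A B = (\<lambda>x. {x + b | b. b \<in> B}) ` A"

definition fully_invariant :: "'a::ab_group_add set \<Rightarrow> bool" where
  "fully_invariant F \<longleftrightarrow> subgrp F \<and> (\<forall>\<phi>. endo \<phi> \<longrightarrow> \<phi> ` F \<subseteq> F)"

definition uniformly_fully_inert :: "'a::ab_group_add set \<Rightarrow> bool" where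
  "uniformly_fully_inert S \<longleftrightarrow> subgrp S \<and>
     (\<exists>m::nat. m > 0 \<and> (\<forall>\<phi>. endo \<phi> \<longrightarrow>
        finite (quotient_set (sumset (\<phi> ` S) S) S) \<and>
        card (quotient_set (sumset (\<phi> ` S) S) S) \<le> m))"

definition commensurable :: "'a::ab_group_add set \<Rightarrow> 'a set \<Rightarrow> bool" where
  "commensurable B C \<longleftrightarrow> finite (quotient_set (sumset B C) B) \<and> finite (quotient_set (sumset B C) C)"

end

theory Submission
  imports Defs
begin

text \<open>
  Call (X, Y) admissible for H if X, Y are subgroups with X \<subseteq> H \<subseteq> Y and both H/X and Y/H
  finite. If m bounds the inertia of H, every endomorphism e maps X into at most m cosets of Y.
  Descend on a uniform bound k for the number of cosets of Y met by e X. If some f attains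
  k \<ge> 2, pass to X' = {x \<in> X. f x \<in> Y} and Y' = Y + f X, again admissible. Were some g to
  meet k cosets of Y' on X', then g X' would meet every coset of Y met by g X, which yields
  x \<in> X with g x \<in> Y and f x \<notin> Y. Now h = f + g agrees with g modulo Y' on X', so h X
  meets at least k cosets of Y'; but h x and h 0 are distinct modulo Y and equal modulo Y',
  so h X meets fewer cosets of Y' than the at most k cosets of Y it meets.
  The descent ends with e X \<subseteq> Y for all e, and then the fully invariant subgroup
  generated by X lies between X and Y, hence is commensurable with H.
\<close>

definition coset :: "'a::ab_group_add set \<Rightarrow> 'a \<Rightarrow> 'a set" where
  "coset B x = {x + b | b. b \<in> B}"

lemma quotient_set_eq: "quotient_set A B = coset B ` A"
  unfolding quotient_set_def coset_def by simp

lemma subgrp_zero: "subgrp B \<Longrightarrow> 0 \<in> B"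
  unfolding subgrp_def by blast

lemma subgrp_add: "subgrp B \<Longrightarrow> x \<in> B \<Longrightarrow> y \<in> B \<Longrightarrow> x + y \<in> B"
  unfolding subgrp_def by blast

lemma subgrp_uminus: "subgrp B \<Longrightarrow> x \<in> B \<Longrightarrow> - x \<in> B"
  unfolding subgrp_def by blast

lemma subgrp_diff: "subgrp B \<Longrightarrow> x \<in> B \<Longrightarrow> y \<in> B \<Longrightarrow> x - y \<in> B"
  using subgrp_add[of B x "- y"] subgrp_uminus[of B y] by simp

lemma endo_zero: "endo f \<Longrightarrow> f 0 = 0"
  unfolding endo_def by (metis add.right_neutral add_left_cancel)

lemma endo_uminus: "endo f \<Longrightarrow> f (- x) = - f x"
  unfolding endo_def by (metis add.right_inverse add_eq_0_iff endo_zero endo_def)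

lemma endo_diff: "endo f \<Longrightarrow> f (x - y) = f x - f y"
  by (metis diff_conv_add_uminus endo_def endo_uminus)

lemma endo_id: "endo id"
  unfolding endo_def by simp

lemma endo_add: "endo f \<Longrightarrow> endo g \<Longrightarrow> endo (\<lambda>x. f x + g x)"
  unfolding endo_def by (simp add: algebra_simps)

lemma endo_comp: "endo f \<Longrightarrow> endo g \<Longrightarrow> endo (f \<circ> g)"
  unfolding endo_def by simp

lemma subgrp_image:
  assumes f: "endo f" and X: "subgrp X" shows "subgrp (f ` X)"
  unfolding subgrp_def
proof (intro conjI ballI)
  show "0 \<in> f ` X"
    using endo_zero[OF f] subgrp_zero[OF X] by (metis image_eqI)
next
  fix u v assume "u \<in> f ` X" "v \<in> f ` X"
  then obtain x y where "x \<in> X" "y \<in> X" "u + v = f (x + y)"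
    using f unfolding endo_def by auto
  then show "u + v \<in> f ` X"
    using subgrp_add[OF X] by blast
next
  fix u assume "u \<in> f ` X"
  then obtain x where "x \<in> X" "- u = f (- x)"
    using endo_uminus[OF f] by auto
  then show "- u \<in> f ` X"
    using subgrp_uminus[OF X] by blast
qed

lemma subgrp_preimage:
  "endo f \<Longrightarrow> subgrp X \<Longrightarrow> subgrp Y \<Longrightarrow> subgrp {x \<in> X. f x \<in> Y}"
  unfolding subgrp_def by (simp add: endo_def endo_uminus endo_zero)

lemma subgrp_sumset:
  assumes A: "subgrp A" and B: "subgrp B" shows "subgrp (sumset A B)"
  unfolding subgrp_def
proof (intro conjI ballI)
  show "0 \<in> sumset A B"
    unfolding sumset_def using A B subgrp_zero by force
next
  fix x y assume "x \<in> sumset A B" "y \<in> sumset A B"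
  then obtain a b a' b' where "a \<in> A" "b \<in> B" "a' \<in> A" "b' \<in> B" "x + y = (a + a') + (b + b')"
    unfolding sumset_def by (auto simp: algebra_simps)
  then show "x + y \<in> sumset A B"
    unfolding sumset_def using A B subgrp_add by blast
next
  fix x assume "x \<in> sumset A B"
  then obtain a b where "a \<in> A" "b \<in> B" "- x = - a + - b"
    unfolding sumset_def by auto
  then show "- x \<in> sumset A B"
    unfolding sumset_def using A B subgrp_uminus by blast
qed

lemma sumset_subset_left: "0 \<in> B \<Longrightarrow> A \<subseteq> sumset A B"
  unfolding sumset_def by force

lemma sumset_subset_right: "0 \<in> A \<Longrightarrow> B \<subseteq> sumset A B"
  unfolding sumset_def by force

lemma sumset_subset_subgrp:
  "subgrp C \<Longrightarrow> A \<subseteq> C \<Longrightarrow> B \<subseteq> C \<Longrightarrow> sumset A B \<subseteq> C"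
  unfolding sumset_def using subgrp_add by blast

lemma coset_zero [simp]: "coset B 0 = B"
  unfolding coset_def by simp

lemma coset_subset:
  assumes "subgrp B" "x - y \<in> B" shows "coset B x \<subseteq> coset B y"
proof
  fix z assume "z \<in> coset B x"
  then obtain b where "b \<in> B" "z = y + ((x - y) + b)"
    unfolding coset_def by (auto simp: algebra_simps)
  then show "z \<in> coset B y"
    unfolding coset_def using assms subgrp_add by blast
qed

lemma coset_eq_iff:
  assumes "subgrp B" shows "coset B x = coset B y \<longleftrightarrow> x - y \<in> B"
proof
  assume "coset B x = coset B y"
  moreover have "x \<in> coset B x"
    unfolding coset_def using subgrp_zero[OF assms] by force
  ultimately show "x - y \<in> B"
    unfolding coset_def by (auto simp: algebra_simps)
next
  assume "x - y \<in> B"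
  moreover have "y - x = - (x - y)" by simp
  ultimately show "coset B x = coset B y"
    using assms coset_subset subgrp_uminus by (metis subset_antisym)
qed

lemma coset_eq_self_iff: "subgrp B \<Longrightarrow> coset B x = B \<longleftrightarrow> x \<in> B"
  using coset_eq_iff[of B x 0] by simp

lemma sumset_coset:
  assumes "subgrp C" "B \<subseteq> C" "0 \<in> B"
  shows "sumset (coset B x) C = coset C x"
proof (intro subset_antisym subsetI)
  fix z assume "z \<in> sumset (coset B x) C"
  then obtain b c where "b \<in> B" "c \<in> C" "z = x + (b + c)"
    unfolding sumset_def coset_def by (auto simp: add.assoc)
  then show "z \<in> coset C x"
    unfolding coset_def using assms subgrp_add by blast
next
  fix z assume "z \<in> coset C x"
  then obtain c where "c \<in> C" "z = (x + 0) + c"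
    unfolding coset_def by auto
  then show "z \<in> sumset (coset B x) C"
    unfolding sumset_def coset_def using assms(3) by blast
qed

lemma quotient_set_mono: "A \<subseteq> A' \<Longrightarrow> quotient_set A B \<subseteq> quotient_set A' B"
  unfolding quotient_set_eq by (rule image_mono)

lemma card_quotient_set_le_one:
  assumes "subgrp B" "A \<subseteq> B" shows "card (quotient_set A B) \<le> 1"
proof -
  have "quotient_set A B \<subseteq> {B}"
    unfolding quotient_set_eq using assms coset_eq_self_iff by blast
  then show ?thesis
    using card_mono[of "{B}"] by simp
qed

lemma one_less_card_quotient_set:
  assumes "subgrp B" "finite (quotient_set A B)" "a \<in> A" "a' \<in> A" "a - a' \<notin> B"
  shows "1 < card (quotient_set A B)"
proof -
  have "coset B a \<in> quotient_set A B" "coset B a' \<in> quotient_set A B" "coset B a \<noteq> coset B a'"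
    using assms coset_eq_iff[OF assms(1)] unfolding quotient_set_eq by auto
  then show ?thesis
    using card_le_Suc0_iff_eq[OF assms(2)] by fastforce
qed

lemma quotient_set_coarsen:
  assumes "subgrp C" "B \<subseteq> C" "0 \<in> B"
  shows "quotient_set A C = (\<lambda>Q. sumset Q C) ` quotient_set A B"
  unfolding quotient_set_eq image_image sumset_coset[OF assms] ..

lemma card_quotient_set_coarsen_le:
  assumes "subgrp C" "B \<subseteq> C" "0 \<in> B" "finite (quotient_set A B)"
  shows "finite (quotient_set A C)" "card (quotient_set A C) \<le> card (quotient_set A B)"
  using quotient_set_coarsen[OF assms(1-3)] assms(4) card_image_le by auto

lemma card_quotient_set_coarsen_less:
  assumes B: "subgrp B" and C: "subgrp C" and "B \<subseteq> C" and fin: "finite (quotient_set A B)"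
    and "a \<in> A" "a' \<in> A" "a - a' \<in> C" "a - a' \<notin> B"
  shows "card (quotient_set A C) < card (quotient_set A B)"
proof -
  let ?\<psi> = "\<lambda>Q. sumset Q C"
  have coarsen: "?\<psi> (coset B x) = coset C x" for x
    using sumset_coset[OF C \<open>B \<subseteq> C\<close> subgrp_zero[OF B]] .
  have "coset B a \<noteq> coset B a'" "?\<psi> (coset B a) = ?\<psi> (coset B a')"
    using assms coset_eq_iff[OF B] coset_eq_iff[OF C] coarsen by simp_all
  moreover have "coset B a \<in> quotient_set A B" "coset B a' \<in> quotient_set A B"
    using assms unfolding quotient_set_eq by auto
  ultimately have "\<not> inj_on ?\<psi> (quotient_set A B)"
    unfolding inj_on_def by blast
  then have "card (?\<psi> ` quotient_set A B) \<noteq> card (quotient_set A B)"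
    using inj_on_iff_eq_card[OF fin] by blast
  then show ?thesis
    using quotient_set_coarsen[OF C \<open>B \<subseteq> C\<close> subgrp_zero[OF B]] card_image_le[OF fin, of ?\<psi>]
    by simp
qed

lemma quotient_set_eq_if_card_le:
  assumes "A' \<subseteq> A" "finite (quotient_set A B)"
    and "card (quotient_set A B) \<le> card (quotient_set A' B)"
  shows "quotient_set A' B = quotient_set A B"
proof -
  have sub: "quotient_set A' B \<subseteq> quotient_set A B"
    using quotient_set_mono[OF assms(1)] .
  then have "card (quotient_set A' B) \<le> card (quotient_set A B)"
    using card_mono[OF assms(2)] by blast
  then show ?thesis
    using card_subset_eq[OF assms(2) sub] assms(3) by simp
qed

definition finitely_covered :: "'a::ab_group_add set \<Rightarrow> 'a set \<Rightarrow> bool" where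
  "finitely_covered A B \<longleftrightarrow> (\<exists>T. finite T \<and> A \<subseteq> sumset T B)"

lemma finite_sumset: "finite S \<Longrightarrow> finite T \<Longrightarrow> finite (sumset S T)"
proof -
  have "sumset S T = (\<lambda>(x, y). x + y) ` (S \<times> T)"
    unfolding sumset_def by auto
  then show "finite S \<Longrightarrow> finite T \<Longrightarrow> finite (sumset S T)"
    by simp
qed

lemma finite_quotient_set_iff_finitely_covered:
  assumes B: "subgrp B"
  shows "finite (quotient_set A B) \<longleftrightarrow> finitely_covered A B"
proof
  assume "finite (quotient_set A B)"
  then obtain R where R: "R \<subseteq> A" "finite R" "coset B ` A = coset B ` R"
    using finite_subset_image[of "coset B ` A" "coset B" A] by (auto simp: quotient_set_eq)
  have "A \<subseteq> sumset R B"
  proof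
    fix a assume "a \<in> A"
    then obtain r where "r \<in> R" "coset B a = coset B r"
      using R(3) by (metis image_iff)
    then have "r \<in> R" "a - r \<in> B" "a = r + (a - r)"
      using coset_eq_iff[OF B] by auto
    then show "a \<in> sumset R B"
      unfolding sumset_def by blast
  qed
  then show "finitely_covered A B"
    unfolding finitely_covered_def using R(2) by blast
next
  assume "finitely_covered A B"
  then obtain T where T: "finite T" "A \<subseteq> sumset T B"
    unfolding finitely_covered_def by blast
  have "quotient_set A B \<subseteq> coset B ` T"
  proof
    fix Q assume "Q \<in> quotient_set A B"
    then obtain a where "a \<in> A" "Q = coset B a"
      by (auto simp: quotient_set_eq)
    moreover obtain t b where "t \<in> T" "b \<in> B" "a = t + b"
      using T(2) \<open>a \<in> A\<close> unfolding sumset_def by blast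
    ultimately show "Q \<in> coset B ` T"
      using coset_eq_iff[OF B, of a t] by auto
  qed
  then show "finite (quotient_set A B)"
    using T(1) finite_subset by blast
qed

lemma finitely_covered_subset: "0 \<in> B \<Longrightarrow> A \<subseteq> B \<Longrightarrow> finitely_covered A B"
  unfolding finitely_covered_def sumset_def by (intro exI[of _ "{0}"]) force

lemma finitely_covered_mono: "A \<subseteq> A' \<Longrightarrow> finitely_covered A' B \<Longrightarrow> finitely_covered A B"
  unfolding finitely_covered_def by blast

lemma finitely_covered_trans:
  assumes "finitely_covered A B" "finitely_covered B C"
  shows "finitely_covered A C"
proof -
  obtain S where S: "finite S" "A \<subseteq> sumset S B"
    using assms(1) unfolding finitely_covered_def by blast
  obtain T where T: "finite T" "B \<subseteq> sumset T C"
    using assms(2) unfolding finitely_covered_def by blast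
  have "A \<subseteq> sumset (sumset S T) C"
  proof
    fix a assume "a \<in> A"
    then obtain s b where "s \<in> S" "b \<in> B" "a = s + b"
      using S(2) unfolding sumset_def by blast
    moreover obtain t c where "t \<in> T" "c \<in> C" "b = t + c"
      using T(2) \<open>b \<in> B\<close> unfolding sumset_def by blast
    ultimately have "s + t \<in> sumset S T" "c \<in> C" "a = (s + t) + c"
      unfolding sumset_def by (auto simp: add.assoc)
    then show "a \<in> sumset (sumset S T) C"
      unfolding sumset_def by blast
  qed
  then show ?thesis
    unfolding finitely_covered_def using finite_sumset[OF S(1) T(1)] by blast
qed

lemma finitely_covered_sumset:
  assumes B: "subgrp B" and "finitely_covered A B"
  shows "finitely_covered (sumset B A) B"
proof -
  obtain T where T: "finite T" "A \<subseteq> sumset T B"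
    using assms(2) unfolding finitely_covered_def by blast
  have "sumset B A \<subseteq> sumset T B"
  proof
    fix x assume "x \<in> sumset B A"
    then obtain b a where "b \<in> B" "a \<in> A" "x = b + a"
      unfolding sumset_def by blast
    moreover obtain t b' where "t \<in> T" "b' \<in> B" "a = t + b'"
      using T(2) \<open>a \<in> A\<close> unfolding sumset_def by blast
    ultimately have "t \<in> T" "b + b' \<in> B" "x = t + (b + b')"
      using subgrp_add[OF B] by (auto simp: algebra_simps)
    then show "x \<in> sumset T B"
      unfolding sumset_def by blast
  qed
  then show ?thesis
    unfolding finitely_covered_def using T(1) by blast
qed

lemma finitely_covered_preimage:
  assumes f: "endo f" and X: "subgrp X" and Y: "subgrp Y"
    and fin: "finite (quotient_set (f ` X) Y)"
  shows "finitely_covered X {x \<in> X. f x \<in> Y}"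
proof -
  define c where "c x = coset Y (f x)" for x
  have "finite (c ` X)"
    using fin by (simp add: quotient_set_eq image_image c_def)
  from finite_subset_image[OF this subset_refl]
  obtain R where R: "R \<subseteq> X" "finite R" "c ` X = c ` R"
    by blast
  have "X \<subseteq> sumset R {x \<in> X. f x \<in> Y}"
  proof
    fix x assume "x \<in> X"
    then have "c x \<in> c ` R"
      using R(3) by blast
    then obtain r where r: "r \<in> R" "c x = c r"
      by blast
    have "x - r \<in> X"
      using \<open>x \<in> X\<close> r(1) R(1) subgrp_diff[OF X] by blast
    moreover have "f (x - r) \<in> Y"
      using r(2) unfolding c_def coset_eq_iff[OF Y] endo_diff[OF f] .
    moreover have "x = r + (x - r)" by simp
    ultimately show "x \<in> sumset R {x \<in> X. f x \<in> Y}"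
      unfolding sumset_def using r(1) by blast
  qed
  then show ?thesis
    unfolding finitely_covered_def using R(2) by blast
qed

lemma commensurable_if_finitely_covered:
  assumes Y: "subgrp Y" and B: "subgrp B" "B \<subseteq> Y" "finitely_covered Y B"
    and C: "subgrp C" "C \<subseteq> Y" "finitely_covered Y C"
  shows "commensurable B C"
proof -
  have "sumset B C \<subseteq> Y"
    using sumset_subset_subgrp[OF Y] B C by blast
  then show ?thesis
    unfolding commensurable_def
    using finite_quotient_set_iff_finitely_covered finitely_covered_mono B C by blast
qed

inductive_set fully_invariant_closure :: "'a::ab_group_add set \<Rightarrow> 'a set" for X where
  image: "endo e \<Longrightarrow> x \<in> X \<Longrightarrow> e x \<in> fully_invariant_closure X"
| add: "a \<in> fully_invariant_closure X \<Longrightarrow> b \<in> fully_invariant_closure X \<Longrightarrow>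
    a + b \<in> fully_invariant_closure X"
| uminus: "a \<in> fully_invariant_closure X \<Longrightarrow> - a \<in> fully_invariant_closure X"

lemma subset_fully_invariant_closure: "X \<subseteq> fully_invariant_closure X"
  using fully_invariant_closure.image[OF endo_id] by fastforce

lemma fully_invariant_fully_invariant_closure:
  assumes "X \<noteq> {}" shows "fully_invariant (fully_invariant_closure X)"
proof -
  obtain x where "x \<in> fully_invariant_closure X"
    using assms subset_fully_invariant_closure by blast
  then have "x + - x \<in> fully_invariant_closure X"
    by (intro fully_invariant_closure.add fully_invariant_closure.uminus)
  then have "subgrp (fully_invariant_closure X)"
    unfolding subgrp_def using fully_invariant_closure.add fully_invariant_closure.uminus by auto
  moreover have "\<phi> a \<in> fully_invariant_closure X"
    if \<phi>: "endo \<phi>" and "a \<in> fully_invariant_closure X" for \<phi> a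
    using \<open>a \<in> fully_invariant_closure X\<close>
  proof induction
    case (image e x)
    then show ?case
      using fully_invariant_closure.image[OF endo_comp[OF \<phi> image(1)] image(2)] by simp
  next
    case (add a b)
    have "\<phi> (a + b) = \<phi> a + \<phi> b"
      using \<phi> unfolding endo_def by blast
    then show ?case
      using add.IH fully_invariant_closure.add by simp
  next
    case (uminus a)
    then show ?case
      using endo_uminus[OF \<phi>] fully_invariant_closure.uminus by simp
  qed
  ultimately show ?thesis
    unfolding fully_invariant_def by blast
qed

lemma fully_invariant_closure_subset:
  assumes "subgrp Y" "\<And>e x. endo e \<Longrightarrow> x \<in> X \<Longrightarrow> e x \<in> Y"
  shows "fully_invariant_closure X \<subseteq> Y"
proof
  fix a assume "a \<in> fully_invariant_closure X"
  then show "a \<in> Y"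
    by induction (use assms subgrp_add subgrp_uminus in blast)+
qed

definition admissible :: "'a::ab_group_add set \<Rightarrow> 'a set \<Rightarrow> 'a set \<Rightarrow> bool" where
  "admissible H X Y \<longleftrightarrow> subgrp X \<and> subgrp Y \<and> X \<subseteq> H \<and> H \<subseteq> Y \<and>
     finitely_covered H X \<and> finitely_covered Y H"

lemma admissible_refl: "subgrp H \<Longrightarrow> admissible H H H"
  unfolding admissible_def using finitely_covered_subset subgrp_zero by blast

lemma quotient_set_image_bound:
  assumes H: "subgrp H" and Y: "subgrp Y" and "X \<subseteq> H" "H \<subseteq> Y"
    and fin: "finite (quotient_set (sumset (e ` H) H) H)"
  shows "finite (quotient_set (e ` X) Y)"
    and "card (quotient_set (e ` X) Y) \<le> card (quotient_set (sumset (e ` H) H) H)"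
proof -
  have "e ` X \<subseteq> sumset (e ` H) H"
    using \<open>X \<subseteq> H\<close> sumset_subset_left[OF subgrp_zero[OF H]] by blast
  then have sub: "quotient_set (e ` X) H \<subseteq> quotient_set (sumset (e ` H) H) H"
    by (rule quotient_set_mono)
  then have "finite (quotient_set (e ` X) H)"
    using fin finite_subset by blast
  then show "finite (quotient_set (e ` X) Y)"
    and "card (quotient_set (e ` X) Y) \<le> card (quotient_set (sumset (e ` H) H) H)"
    using card_quotient_set_coarsen_le[OF Y \<open>H \<subseteq> Y\<close> subgrp_zero[OF H]] card_mono[OF fin sub]
    by fastforce+
qed

lemma finite_quotient_set_image_admissible:
  assumes "uniformly_fully_inert H" "admissible H X Y" "endo e"
  shows "finite (quotient_set (e ` X) Y)"
  using assms quotient_set_image_bound(1)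
  unfolding uniformly_fully_inert_def admissible_def by blast

lemma admissible_descent:
  assumes adm: "admissible H X Y" and f: "endo f" and fin: "finite (quotient_set (f ` X) Y)"
  shows "admissible H {x \<in> X. f x \<in> Y} (sumset Y (f ` X))"
proof -
  have X: "subgrp X" and Y: "subgrp Y" and "X \<subseteq> H" "H \<subseteq> Y"
    and HX: "finitely_covered H X" and YH: "finitely_covered Y H"
    using adm unfolding admissible_def by blast+
  have "subgrp {x \<in> X. f x \<in> Y}" "subgrp (sumset Y (f ` X))"
    using subgrp_preimage[OF f X Y] subgrp_sumset[OF Y subgrp_image[OF f X]] .
  moreover have "H \<subseteq> sumset Y (f ` X)"
    using \<open>H \<subseteq> Y\<close> sumset_subset_left subgrp_zero[OF subgrp_image[OF f X]] by blast
  moreover have "finitely_covered H {x \<in> X. f x \<in> Y}"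
    using finitely_covered_trans[OF HX finitely_covered_preimage[OF f X Y fin]] .
  moreover have "finitely_covered (sumset Y (f ` X)) H"
    using finitely_covered_trans[OF finitely_covered_sumset[OF Y] YH]
      fin finite_quotient_set_iff_finitely_covered[OF Y] by blast
  ultimately show ?thesis
    unfolding admissible_def using \<open>X \<subseteq> H\<close> by blast
qed

lemma separating_element_exists:
  assumes f: "endo f" and g: "endo g" and X: "subgrp X" and Y: "subgrp Y"
    and eq: "quotient_set (g ` {x \<in> X. f x \<in> Y}) Y = quotient_set (g ` X) Y"
    and "x\<^sub>1 \<in> X" "f x\<^sub>1 \<notin> Y"
  shows "\<exists>x \<in> X. g x \<in> Y \<and> f x \<notin> Y"
proof -
  have "coset Y (g x\<^sub>1) \<in> quotient_set (g ` {x \<in> X. f x \<in> Y}) Y"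
    unfolding eq unfolding quotient_set_eq using \<open>x\<^sub>1 \<in> X\<close> by (intro imageI)
  then obtain z where z: "z \<in> X" "f z \<in> Y" "coset Y (g x\<^sub>1) = coset Y (g z)"
    unfolding quotient_set_eq by blast
  have "x\<^sub>1 - z \<in> X"
    using subgrp_diff[OF X \<open>x\<^sub>1 \<in> X\<close> z(1)] .
  moreover have "g (x\<^sub>1 - z) \<in> Y"
    using z(3) unfolding coset_eq_iff[OF Y] endo_diff[OF g] .
  moreover have "f (x\<^sub>1 - z) \<notin> Y"
  proof
    assume "f (x\<^sub>1 - z) \<in> Y"
    then have "f (x\<^sub>1 - z) + f z \<in> Y"
      using subgrp_add[OF Y _ z(2)] by blast
    then show False
      using \<open>f x\<^sub>1 \<notin> Y\<close> by (simp add: endo_diff[OF f])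
  qed
  ultimately show ?thesis by blast
qed

lemma quotient_set_image_add_subset:
  assumes Y': "subgrp Y'" and "Y \<subseteq> Y'"
  shows "quotient_set (g ` {x \<in> X. f x \<in> Y}) Y' \<subseteq> quotient_set ((\<lambda>x. f x + g x) ` X) Y'"
proof
  fix Q assume "Q \<in> quotient_set (g ` {x \<in> X. f x \<in> Y}) Y'"
  then obtain w where w: "w \<in> X" "f w \<in> Y" "Q = coset Y' (g w)"
    unfolding quotient_set_eq by blast
  have "coset Y' (f w + g w) = Q"
    unfolding w(3) coset_eq_iff[OF Y'] using w(2) \<open>Y \<subseteq> Y'\<close> by auto
  then show "Q \<in> quotient_set ((\<lambda>x. f x + g x) ` X) Y'"
    unfolding quotient_set_eq using w(1) by blast
qed

lemma card_quotient_set_descent: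
  assumes X: "subgrp X" and Y: "subgrp Y"
    and fin: "\<And>e. endo e \<Longrightarrow> finite (quotient_set (e ` X) Y)"
    and bound: "\<And>e. endo e \<Longrightarrow> card (quotient_set (e ` X) Y) \<le> k"
    and f: "endo f" "k \<le> card (quotient_set (f ` X) Y)" "x\<^sub>1 \<in> X" "f x\<^sub>1 \<notin> Y"
    and g: "endo g"
  shows "card (quotient_set (g ` {x \<in> X. f x \<in> Y}) (sumset Y (f ` X))) < k"
proof (rule ccontr)
  define X' where "X' = {x \<in> X. f x \<in> Y}"
  define Y' where "Y' = sumset Y (f ` X)"
  define h where "h = (\<lambda>x. f x + g x)"
  have h: "endo h"
    unfolding h_def using endo_add[OF f(1) g] .
  assume "\<not> card (quotient_set (g ` {x \<in> X. f x \<in> Y}) (sumset Y (f ` X))) < k"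
  then have k_le: "k \<le> card (quotient_set (g ` X') Y')"
    unfolding X'_def Y'_def by simp
  have Y': "subgrp Y'" "Y \<subseteq> Y'" "f ` X \<subseteq> Y'"
    unfolding Y'_def using subgrp_sumset[OF Y subgrp_image[OF f(1) X]]
      sumset_subset_left[OF subgrp_zero[OF subgrp_image[OF f(1) X]]]
      sumset_subset_right[OF subgrp_zero[OF Y]] by blast+
  have gX': "g ` X' \<subseteq> g ` X"
    unfolding X'_def by blast
  have fin': "finite (quotient_set (g ` X') Y)"
    using finite_subset[OF quotient_set_mono[OF gX'] fin[OF g]] .
  have "card (quotient_set (g ` X) Y) \<le> card (quotient_set (g ` X') Y')"
    using bound[OF g] k_le by linarith
  also have "\<dots> \<le> card (quotient_set (g ` X') Y)"
    using card_quotient_set_coarsen_le(2)[OF Y'(1,2) subgrp_zero[OF Y] fin'] .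
  finally have "quotient_set (g ` X') Y = quotient_set (g ` X) Y"
    using quotient_set_eq_if_card_le[OF gX' fin[OF g]] by blast
  then obtain x where x: "x \<in> X" "g x \<in> Y" "f x \<notin> Y"
    using separating_element_exists[OF f(1) g X Y _ f(3,4)] unfolding X'_def by blast
  have "quotient_set (g ` X') Y' \<subseteq> quotient_set (h ` X) Y'"
    unfolding X'_def h_def by (rule quotient_set_image_add_subset[OF Y'(1,2)])
  then have "k \<le> card (quotient_set (h ` X) Y')"
    using k_le card_mono card_quotient_set_coarsen_le(1)[OF Y'(1,2) subgrp_zero[OF Y] fin[OF h]]
    by (meson order_trans)
  also have "\<dots> < card (quotient_set (h ` X) Y)"
  proof (rule card_quotient_set_coarsen_less[OF Y Y'(1,2) fin[OF h]])
    show "h x \<in> h ` X" "h 0 \<in> h ` X"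
      using x(1) subgrp_zero[OF X] by blast+
    have "f x \<in> Y'" "g x \<in> Y'"
      using x(1,2) Y'(2,3) by blast+
    then show "h x - h 0 \<in> Y'"
      using subgrp_add[OF Y'(1)] endo_zero[OF h] unfolding h_def by simp
    show "h x - h 0 \<notin> Y"
      using x(2,3) subgrp_diff[OF Y, of "f x + g x" "g x"] endo_zero[OF h] unfolding h_def by auto
  qed
  also have "\<dots> \<le> k"
    using bound[OF h] .
  finally show False by simp
qed

lemma admissible_invariant_exists:
  assumes ufi: "uniformly_fully_inert H" and "admissible H X Y"
    and "\<And>e. endo e \<Longrightarrow> card (quotient_set (e ` X) Y) \<le> k"
  shows "\<exists>X Y. admissible H X Y \<and> (\<forall>e. endo e \<longrightarrow> e ` X \<subseteq> Y)"
  using assms(2,3)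
proof (induction k arbitrary: X Y rule: less_induct)
  case (less k X Y)
  have X: "subgrp X" and Y: "subgrp Y"
    using less.prems(1) unfolding admissible_def by blast+
  have fin: "finite (quotient_set (e ` X) Y)" if "endo e" for e
    using finite_quotient_set_image_admissible[OF ufi less.prems(1) that] .
  show ?case
  proof (cases "\<forall>e. endo e \<longrightarrow> e ` X \<subseteq> Y")
    case True
    then show ?thesis
      using less.prems(1) by blast
  next
    case False
    then obtain f x\<^sub>1 where f: "endo f" "x\<^sub>1 \<in> X" "f x\<^sub>1 \<notin> Y"
      by blast
    have "1 < card (quotient_set (f ` X) Y)"
      using one_less_card_quotient_set[OF Y fin[OF f(1)], of "f x\<^sub>1" "f 0"]
        f subgrp_zero[OF X] endo_zero[OF f(1)] by simp
    then have "1 < k"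
      using less.prems(2)[OF f(1)] by linarith
    show ?thesis
    proof (cases "\<exists>f'. endo f' \<and> k \<le> card (quotient_set (f' ` X) Y)")
      case True
      then obtain f' where f': "endo f'" "k \<le> card (quotient_set (f' ` X) Y)"
        by blast
      then obtain x\<^sub>1' where "x\<^sub>1' \<in> X" "f' x\<^sub>1' \<notin> Y"
        using card_quotient_set_le_one[OF Y, of "f' ` X"] \<open>1 < k\<close> by fastforce
      then have "card (quotient_set (g ` {x \<in> X. f' x \<in> Y}) (sumset Y (f' ` X))) \<le> k - 1"
        if "endo g" for g
        using card_quotient_set_descent[OF X Y fin less.prems(2) f'] that by fastforce
      moreover have "admissible H {x \<in> X. f' x \<in> Y} (sumset Y (f' ` X))"
        using admissible_descent[OF less.prems(1) f'(1) fin[OF f'(1)]] .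
      ultimately show ?thesis
        using less.IH[of "k - 1"] \<open>1 < k\<close> by simp
    next
      case False
      then show ?thesis
        using less.IH[of "k - 1"] less.prems(1) \<open>1 < k\<close> by fastforce
    qed
  qed
qed

lemma commensurable_fully_invariant_closure:
  assumes H: "subgrp H" and adm: "admissible H X Y" and inv: "\<And>e. endo e \<Longrightarrow> e ` X \<subseteq> Y"
  shows "commensurable H (fully_invariant_closure X)"
proof -
  have X: "subgrp X" and Y: "subgrp Y" and "H \<subseteq> Y"
    and HX: "finitely_covered H X" and YH: "finitely_covered Y H"
    using adm unfolding admissible_def by blast+
  have "subgrp (fully_invariant_closure X)"
    using fully_invariant_fully_invariant_closure subgrp_zero[OF X]
    unfolding fully_invariant_def by blast
  moreover have "fully_invariant_closure X \<subseteq> Y"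
    using fully_invariant_closure_subset[OF Y] inv by blast
  moreover have "finitely_covered Y (fully_invariant_closure X)"
    using finitely_covered_trans[OF YH finitely_covered_trans[OF HX]]
      finitely_covered_subset[OF subgrp_zero[OF \<open>subgrp (fully_invariant_closure X)\<close>]
        subset_fully_invariant_closure] .
  ultimately show ?thesis
    using commensurable_if_finitely_covered[OF Y H \<open>H \<subseteq> Y\<close> YH] by blast
qed

theorem theorem2p4:
  fixes H :: "'a::ab_group_add set"
  assumes "uniformly_fully_inert H"
  shows "\<exists>F. fully_invariant F \<and> commensurable H F"
proof -
  obtain m where H: "subgrp H"
    and m: "\<And>e. endo e \<Longrightarrow> finite (quotient_set (sumset (e ` H) H) H) \<and>
                           card (quotient_set (sumset (e ` H) H) H) \<le> m"
    using assms unfolding uniformly_fully_inert_def by blast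
  have "card (quotient_set (e ` H) H) \<le> m" if "endo e" for e
    using quotient_set_image_bound(2)[OF H H order_refl order_refl] m[OF that] by fastforce
  then obtain X Y where adm: "admissible H X Y" and inv: "\<And>e. endo e \<Longrightarrow> e ` X \<subseteq> Y"
    using admissible_invariant_exists[OF assms admissible_refl[OF H]] by blast
  have "fully_invariant (fully_invariant_closure X)"
    using fully_invariant_fully_invariant_closure adm subgrp_zero
    unfolding admissible_def by blast
  then show ?thesis
    using commensurable_fully_invariant_closure[OF H adm inv] by blast
qed

end
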